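(* Let $G$ be a subgroup of $\mathrm{V}(r,\mathbb R^*_+,\mathbb R)$ with $G\cap\mathrm{F}(r,\mathbb R^*_+,\mathbb R)=\mathrm{F}(r,\Lambda,A)=\mathrm{F}$. Let $a\in\mathrm{F}^\uparrow$ with $\mathrm{supp}(a)=(0,r)$, $\alpha_0\in(0,r)\cap A$, $\alpha_k=(\alpha_0)a^k$, and $b\in\mathrm{F}^\uparrow$ with $\mathrm{supp}(b)=(\alpha_0,\alpha_1)$. Then $C_G(a)=C_{\mathrm F}(a)$ and $C_G(\{a^{-k}ba^k\mid k\in\mathbb Z\})=C_{\mathrm F}(\{a^{-k}ba^k\mid k\in\mathbb Z\})$.
   Context: Admissible triple $(r,\Lambda,A)$: $r>0$, $\Lambda\le\mathbb R^*_+$ nontrivial, $A\subseteq\mathbb R$ additive subgroup with $r\in A$, $\Lambda A\subseteq A$. $\mathrm{V}(r,\Lambda,A)$ is the group of bijections of $[0,r)$ that are piecewise affine with finitely many cuts and singular points, right-continuous everywhere, slopes in $\Lambda$, cut/singular points and their images in $A$; $\mathrm{F}(r,\Lambda,A)$ is its subgroup of elements continuous in the usual topology. Maps act on the right. $\mathrm{F}^\uparrow=\{x\in\mathrm{F}\mid(t)x\ge t\ \forall t\}$; $\mathrm{supp}$ is the set of non-fixed points; $C_G(\cdot)$ denotes centralizer in $G$. *)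

theory Defs
  imports "HOL-Analysis.Analysis"
begin

text \<open>Elements of V(r,Lambda,A) are modelled as functions real => real that are the
identity outside [0,r). Maps act on the right, so the product x*y (first x, then y)
is the function y o x.\<close>

definition admissible :: "real \<Rightarrow> real set \<Rightarrow> real set \<Rightarrow> bool" where
  "admissible r \<Lambda> A \<longleftrightarrow>
     r > 0 \<and>
     \<Lambda> \<subseteq> {0<..} \<and> 1 \<in> \<Lambda> \<and> (\<forall>x\<in>\<Lambda>. \<forall>y\<in>\<Lambda>. x * y \<in> \<Lambda>) \<and> (\<forall>x\<in>\<Lambda>. inverse x \<in> \<Lambda>) \<and> \<Lambda> \<noteq> {1} \<and>
     0 \<in> A \<and> (\<forall>x\<in>A. \<forall>y\<in>A. x + y \<in> A) \<and> (\<forall>x\<in>A. - x \<in> A) \<and>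
     r \<in> A \<and> (\<forall>l\<in>\<Lambda>. \<forall>x\<in>A. l * x \<in> A)"

definition pw_affine :: "real \<Rightarrow> real set \<Rightarrow> real set \<Rightarrow> (real \<Rightarrow> real) \<Rightarrow> bool" where
  "pw_affine r \<Lambda> A f \<longleftrightarrow>
     (\<exists>S. finite S \<and> 0 \<in> S \<and> S \<subseteq> {0..<r} \<and> S \<subseteq> A \<and>
        (\<forall>s\<in>S. f s \<in> A \<and>
           (\<exists>l\<in>\<Lambda>. \<exists>c. \<forall>t. s \<le> t \<and> t < r \<and> (\<forall>u\<in>S. u \<le> s \<or> t < u) \<longrightarrow> f t = l * t + c)))"

definition Vgrp :: "real \<Rightarrow> real set \<Rightarrow> real set \<Rightarrow> (real \<Rightarrow> real) set" where
  "Vgrp r \<Lambda> A = {f. bij_betw f {0..<r} {0..<r} \<and> (\<forall>t. t \<notin> {0..<r} \<longrightarrow> f t = t)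
                     \<and> pw_affine r \<Lambda> A f}"

definition Fgrp :: "real \<Rightarrow> real set \<Rightarrow> real set \<Rightarrow> (real \<Rightarrow> real) set" where
  "Fgrp r \<Lambda> A = {f \<in> Vgrp r \<Lambda> A. continuous_on {0..<r} f}"

definition Fup :: "real \<Rightarrow> real set \<Rightarrow> real set \<Rightarrow> (real \<Rightarrow> real) set" where
  "Fup r \<Lambda> A = {f \<in> Fgrp r \<Lambda> A. \<forall>t. f t \<ge> t}"

definition supp :: "(real \<Rightarrow> real) \<Rightarrow> real set" where
  "supp f = {t. f t \<noteq> t}"

definition is_subgroup_of :: "(real \<Rightarrow> real) set \<Rightarrow> (real \<Rightarrow> real) set \<Rightarrow> bool" where
  "is_subgroup_of G H \<longleftrightarrow> G \<subseteq> H \<and> id \<in> G \<and> (\<forall>f\<in>G. \<forall>g\<in>G. f \<circ> g \<in> G) \<and> (\<forall>f\<in>G. inv f \<in> G)"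

definition zpow :: "(real \<Rightarrow> real) \<Rightarrow> int \<Rightarrow> (real \<Rightarrow> real)" where
  "zpow f k = (if k \<ge> 0 then f ^^ nat k else (inv f) ^^ nat (- k))"

definition centralizer :: "(real \<Rightarrow> real) set \<Rightarrow> (real \<Rightarrow> real) set \<Rightarrow> (real \<Rightarrow> real) set" where
  "centralizer G X = {g \<in> G. \<forall>x\<in>X. g \<circ> x = x \<circ> g}"

end

theory Submission
  imports Defs
begin

text \<open>
  Since G meets the continuous maps exactly in F, it suffices
  to show that g has no discontinuity in (0,r); right-continuity at 0 is automatic.

  The argument rests on two observations about an element g of V commuting with an
  increasing homeomorphism h that moves points upwards:
  (1) the finitely many discontinuities of g are permuted by h, and a finite set that is
      invariant in this sense cannot meet supp h, so g is continuous on supp h;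
  (2) if g commutes with two such maps supported on adjacent intervals (beta,alpha) and
      (alpha,gamma), then g preserves both intervals, and its one-sided affine germs at alpha
      force g alpha = alpha and continuity at alpha.
  For a itself, supp a = (0,r) and (1) suffices.  For the conjugates, the supports are the
  intervals (a^k alpha0, a^(k+1) alpha0), which tile (0,r) up to their endpoints; (1) handles
  the interiors and (2) the endpoints.
\<close>

definition incr_homeo :: "(real \<Rightarrow> real) \<Rightarrow> bool" where
  "incr_homeo h \<longleftrightarrow> bij h \<and> strict_mono h"

lemma incr_homeo_bij: "incr_homeo h \<Longrightarrow> bij h"
  unfolding incr_homeo_def by simp

lemma incr_homeo_inv_apply: "incr_homeo h \<Longrightarrow> h (inv h y) = y"
  unfolding incr_homeo_def by (meson bij_inv_eq_iff)

lemma incr_homeo_apply_inv: "incr_homeo h \<Longrightarrow> inv h (h y) = y"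
  unfolding incr_homeo_def by (simp add: bij_is_inj)

lemma incr_homeo_less_iff: "incr_homeo h \<Longrightarrow> h x < h y \<longleftrightarrow> x < y"
  unfolding incr_homeo_def by (simp add: strict_mono_less)

lemma incr_homeo_le_iff: "incr_homeo h \<Longrightarrow> h x \<le> h y \<longleftrightarrow> x \<le> y"
  unfolding incr_homeo_def by (simp add: strict_mono_less_eq)

lemma incr_homeo_inv: "incr_homeo h \<Longrightarrow> incr_homeo (inv h)"
  unfolding incr_homeo_def
  by (metis bij_imp_bij_inv bij_inv_eq_iff strict_mono_less strict_monoI)

lemma incr_homeo_comp: "incr_homeo f \<Longrightarrow> incr_homeo g \<Longrightarrow> incr_homeo (f \<circ> g)"
  unfolding incr_homeo_def by (auto intro: bij_comp strict_monoI simp: strict_mono_less)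

lemma incr_homeo_funpow: "incr_homeo f \<Longrightarrow> incr_homeo (f ^^ n)"
proof (induction n)
  case 0 show ?case by (simp add: incr_homeo_def strict_mono_def bij_id[unfolded id_def])
next
  case (Suc n) then show ?case unfolding funpow.simps(2) by (intro incr_homeo_comp)
qed

lemma incr_homeo_zpow: "incr_homeo f \<Longrightarrow> incr_homeo (zpow f k)"
  unfolding zpow_def by (auto simp: incr_homeo_funpow incr_homeo_inv)

lemma incr_homeo_isCont:
  assumes "incr_homeo h" shows "isCont h x"
proof -
  have "continuous_on UNIV h"
  proof (rule continuous_onI_mono)
    show "open (range h)" using assms unfolding incr_homeo_def by (simp add: bij_is_surj)
  qed (use incr_homeo_le_iff[OF assms] in blast)
  then show ?thesis by (simp add: continuous_on_eq_continuous_at)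
qed

lemma incr_homeo_image_interval:
  assumes "incr_homeo h" shows "h ` {x<..<y} = {h x<..<h y}"
proof
  show "h ` {x<..<y} \<subseteq> {h x<..<h y}" using incr_homeo_less_iff[OF assms] by auto
  show "{h x<..<h y} \<subseteq> h ` {x<..<y}"
  proof
    fix z assume "z \<in> {h x<..<h y}"
    then have "inv h z \<in> {x<..<y}" "z = h (inv h z)"
      using incr_homeo_less_iff[OF assms, of _ "inv h z"] incr_homeo_less_iff[OF assms, of "inv h z"]
        incr_homeo_inv_apply[OF assms] by auto
    then show "z \<in> h ` {x<..<y}" by blast
  qed
qed

lemma zpow_cancel:
  assumes "bij f" shows "zpow f k (zpow f (- k) x) = x"
proof -
  have "(f ^^ n) ((inv f ^^ n) x) = x" "(inv f ^^ n) ((f ^^ n) x) = x" for n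
    using fun_cong[OF fn_o_inv_fn_is_id[OF assms]] fun_cong[OF inv_fn_o_fn_is_id[OF assms]] by simp_all
  then show ?thesis unfolding zpow_def by auto
qed

lemma zpow_succ:
  assumes "bij f" shows "zpow f (k + 1) x = zpow f k (f x)"
proof (cases "k \<ge> 0")
  case True
  then have "nat (k + 1) = Suc (nat k)" by simp
  then show ?thesis using True unfolding zpow_def by (simp add: funpow_swap1)
next
  case False
  define n where "n = nat (- k - 1)"
  have n: "k = - int (Suc n)" using False unfolding n_def by simp
  then have "nat (- k) = Suc n" by simp
  then have "zpow f k = inv f ^^ n \<circ> inv f" "zpow f (k + 1) = inv f ^^ n"
    using n unfolding zpow_def by (auto simp del: funpow.simps simp add: funpow_Suc_right)
  then show ?thesis using assms by (simp add: bij_is_inj)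
qed

lemma zpow_of_nat: "zpow f (int n) = f ^^ n"
  by (simp add: zpow_def)

lemma zpow_neg_of_nat: "zpow f (- int n) = inv f ^^ n"
  by (cases "n = 0") (simp_all add: zpow_def)

lemma zpow_fixed:
  assumes "bij f" "f y = y" shows "zpow f k y = y"
proof -
  have "(h ^^ n) y = y" if "h y = y" for h :: "real \<Rightarrow> real" and n
    using that by (induction n) auto
  moreover have "inv f y = y" using assms by (metis bij_is_inj inv_f_f)
  ultimately show ?thesis unfolding zpow_def using assms(2) by auto
qed

definition discont :: "real \<Rightarrow> (real \<Rightarrow> real) \<Rightarrow> real set" where
  "discont r g = {t \<in> {0<..<r}. \<not> isCont g t}"

lemma pw_affine_pieces:
  assumes "pw_affine r \<Lambda> A f"
  shows "\<exists>S. finite S \<and> (\<forall>t\<in>{0..<r}. \<exists>s e. \<exists>l\<in>\<Lambda>. \<exists>c. s \<le> t \<and> t < e \<and> e \<le> r \<and> (e \<in> S \<or> e = r)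
           \<and> (t \<notin> S \<longrightarrow> s < t) \<and> (\<forall>x\<in>{s..<e}. f x = l * x + c))"
proof -
  obtain S where S: "finite S" "0 \<in> S"
    and aff: "\<forall>s\<in>S. f s \<in> A \<and>
      (\<exists>l\<in>\<Lambda>. \<exists>c. \<forall>x. s \<le> x \<and> x < r \<and> (\<forall>u\<in>S. u \<le> s \<or> x < u) \<longrightarrow> f x = l * x + c)"
    using assms unfolding pw_affine_def by (elim exE conjE) (rule that)
  have "\<exists>s e. \<exists>l\<in>\<Lambda>. \<exists>c. s \<le> t \<and> t < e \<and> e \<le> r \<and> (e \<in> S \<or> e = r)
           \<and> (t \<notin> S \<longrightarrow> s < t) \<and> (\<forall>x\<in>{s..<e}. f x = l * x + c)"
    if "t \<in> {0..<r}" for t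
  proof -
    have t: "0 \<le> t" "t < r" using that by auto
    define s where "s = Max {u\<in>S. u \<le> t}"
    define e where "e = Min (insert r {u\<in>S. t < u})"
    have below: "finite {u\<in>S. u \<le> t}" "{u\<in>S. u \<le> t} \<noteq> {}" using S t by auto
    have above: "finite (insert r {u\<in>S. t < u})" using S by auto
    have s: "s \<in> S" "s \<le> t" and s_max: "\<And>u. u \<in> S \<Longrightarrow> u \<le> t \<Longrightarrow> u \<le> s"
      using Max_in[OF below] Max_ge[OF below(1)] unfolding s_def by auto
    have e: "e \<in> insert r {u\<in>S. t < u}" and e_min: "\<And>u. u \<in> insert r {u\<in>S. t < u} \<Longrightarrow> e \<le> u"
      using Min_in[OF above] Min_le[OF above] unfolding e_def by auto
    obtain l c where l: "l \<in> \<Lambda>"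
      and lc: "\<And>x. s \<le> x \<Longrightarrow> x < r \<Longrightarrow> \<forall>u\<in>S. u \<le> s \<or> x < u \<Longrightarrow> f x = l * x + c"
      using aff s(1) by blast
    have gap: "\<forall>u\<in>S. u \<le> t \<or> e \<le> u" using e_min by force
    have "\<forall>x\<in>{s..<e}. f x = l * x + c"
    proof
      fix x assume x: "x \<in> {s..<e}"
      have "\<forall>u\<in>S. u \<le> s \<or> x < u" using s_max gap x by fastforce
      then show "f x = l * x + c" using lc x e_min[of r] by simp
    qed
    moreover have "t \<notin> S \<longrightarrow> s < t" using s by (auto simp: le_less)
    ultimately show ?thesis using s e e_min[of r] t l by blast
  qed
  with S(1) show ?thesis by blast
qed

lemma pw_affine_right_germ:
  assumes "pw_affine r \<Lambda> A f" "0 \<le> t" "t < r"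
  obtains e l c where "t < e" "e \<le> r" "l \<in> \<Lambda>" "\<forall>x\<in>{t..<e}. f x = l * x + c"
proof -
  obtain S where piece: "\<forall>t\<in>{0..<r}. \<exists>s e. \<exists>l\<in>\<Lambda>. \<exists>c. s \<le> t \<and> t < e \<and> e \<le> r \<and> (e \<in> S \<or> e = r)
           \<and> (t \<notin> S \<longrightarrow> s < t) \<and> (\<forall>x\<in>{s..<e}. f x = l * x + c)"
    using pw_affine_pieces[OF assms(1)] by blast
  have t: "t \<in> {0..<r}" using assms(2,3) by simp
  obtain s e l c where "s \<le> t" "t < e" "e \<le> r" "l \<in> \<Lambda>" "\<forall>x\<in>{s..<e}. f x = l * x + c"
    using bspec[OF piece t] by (elim exE bexE conjE) (rule that)
  then show ?thesis by (intro that[of e l c]) auto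
qed

lemma pw_affine_left_germ:
  assumes "pw_affine r \<Lambda> A f" "0 < t" "t < r"
  obtains s l c where "s < t" "l \<in> \<Lambda>" "\<forall>x\<in>{s<..<t}. f x = l * x + c"
proof -
  obtain S where S: "finite S"
    and piece: "\<forall>t\<in>{0..<r}. \<exists>s e. \<exists>l\<in>\<Lambda>. \<exists>c. s \<le> t \<and> t < e \<and> e \<le> r \<and> (e \<in> S \<or> e = r)
           \<and> (t \<notin> S \<longrightarrow> s < t) \<and> (\<forall>x\<in>{s..<e}. f x = l * x + c)"
    using pw_affine_pieces[OF assms(1)] by blast
  define B where "B = insert 0 {u\<in>S. u < t}"
  define t0 where "t0 = Max B"
  have B: "finite B" "B \<noteq> {}" using S unfolding B_def by auto
  have t0: "0 \<le> t0" "t0 < t" and t0_max: "\<And>u. u \<in> S \<Longrightarrow> u < t \<Longrightarrow> u \<le> t0"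
    using Max_in[OF B] Max_ge[OF B(1)] assms(2) unfolding t0_def B_def by auto
  have "t0 \<in> {0..<r}" using t0 assms(3) by simp
  obtain s e l c where l: "l \<in> \<Lambda>" and se: "s \<le> t0" "t0 < e" "e \<le> r" "e \<in> S \<or> e = r"
    "t0 \<notin> S \<longrightarrow> s < t0" and lc: "\<forall>x\<in>{s..<e}. f x = l * x + c"
    using bspec[OF piece \<open>t0 \<in> {0..<r}\<close>] by (elim exE bexE conjE) (rule that)
  have "t \<le> e"
  proof (rule ccontr)
    assume "\<not> t \<le> e"
    then have "e \<in> S" "e < t" using se(4) assms(3) by auto
    then show False using t0_max se(2) by fastforce
  qed
  then have "\<forall>x\<in>{t0<..<t}. f x = l * x + c" using lc se by auto
  then show ?thesis using that t0 l by blast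
qed

lemma pw_affine_discont_finite:
  assumes "pw_affine r \<Lambda> A f" shows "finite (discont r f)"
proof -
  obtain S where S: "finite S"
    and piece: "\<forall>t\<in>{0..<r}. \<exists>s e. \<exists>l\<in>\<Lambda>. \<exists>c. s \<le> t \<and> t < e \<and> e \<le> r \<and> (e \<in> S \<or> e = r)
           \<and> (t \<notin> S \<longrightarrow> s < t) \<and> (\<forall>x\<in>{s..<e}. f x = l * x + c)"
    using pw_affine_pieces[OF assms(1)] by blast
  have "isCont f t" if t: "0 < t" "t < r" "t \<notin> S" for t
  proof -
    have "t \<in> {0..<r}" using t by simp
    then obtain s e l c where "s < t" "t < e" and lc: "\<forall>x\<in>{s..<e}. f x = l * x + c"
      using piece t(3) by blast
    then have "eventually (\<lambda>x. f x = l * x + c) (nhds t)"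
      unfolding eventually_nhds by (intro exI[of _ "{s<..<e}"]) auto
    then show ?thesis by (simp add: isCont_cong)
  qed
  then have "discont r f \<subseteq> S" unfolding discont_def by auto
  then show ?thesis using S finite_subset by blast
qed

text \<open>An element of V is right-continuous at 0, so it is continuous on [0,r) as soon as it
  has no discontinuity in (0,r).\<close>
lemma V_continuous_on:
  assumes "g \<in> Vgrp r \<Lambda> A" "discont r g = {}"
  shows "continuous_on {0..<r} g"
  unfolding continuous_on_eq_continuous_within
proof
  fix t assume t: "t \<in> {0..<r}"
  show "continuous (at t within {0..<r}) g"
  proof (cases "t = 0")
    case False
    then have "isCont g t" using assms(2) t unfolding discont_def by auto
    then show ?thesis by (rule continuous_at_imp_continuous_at_within)
  next
    case True
    have "pw_affine r \<Lambda> A g" using assms(1) unfolding Vgrp_def by auto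
    then obtain e l c where e: "0 < e" "e \<le> r" "l \<in> \<Lambda>" and lc: "\<forall>x\<in>{0..<e}. g x = l * x + c"
      using pw_affine_right_germ[of r \<Lambda> A g 0] t True by auto
    have "continuous_on {0..<e} g"
      by (rule continuous_on_eq[of _ "\<lambda>x. l * x + c"]) (use lc in \<open>auto intro!: continuous_intros\<close>)
    then have "continuous (at 0 within {0..<e}) g" using e by (simp add: continuous_on_eq_continuous_within)
    moreover have "at 0 within {0..<e} = at 0 within {0..<r}"
      by (rule at_within_nhd[of _ "{..<e}"]) (use e in auto)
    ultimately show ?thesis using True by simp
  qed
qed

lemma V_bij:
  assumes "g \<in> Vgrp r \<Lambda> A" shows "bij g"
proof -
  have inside: "bij_betw g {0..<r} {0..<r}" and outside: "\<And>t. t \<notin> {0..<r} \<Longrightarrow> g t = t"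
    using assms unfolding Vgrp_def by auto
  have "bij_betw g (- {0..<r}) (- {0..<r})"
    using bij_betw_cong[of "- {0..<r}" g id] outside by simp
  from bij_betw_combine[OF inside this] show ?thesis by simp
qed

lemma F_incr_homeo:
  assumes f: "f \<in> Fgrp r \<Lambda> A" and ge: "\<And>t. t \<le> f t" and f0: "f 0 = 0"
  shows "incr_homeo f"
proof -
  have fV: "f \<in> Vgrp r \<Lambda> A" and cont: "continuous_on {0..<r} f" using f unfolding Fgrp_def by auto
  have inside: "bij_betw f {0..<r} {0..<r}" and outside: "\<And>t. t \<notin> {0..<r} \<Longrightarrow> f t = t"
    using fV unfolding Vgrp_def by auto
  have maps: "f t \<in> {0..<r}" if "t \<in> {0..<r}" for t using inside that bij_betwE by blast
  have "f x < f y" if xy: "x < y" for x y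
  proof -
    consider "y < 0 \<or> r \<le> x" | "x < 0" "0 \<le> y" | "x < r" "r \<le> y" | "0 \<le> x" "y < r" by linarith
    then show ?thesis
    proof cases
      case 1 then show ?thesis using outside xy by auto
    next
      case 2 then show ?thesis using outside ge[of y] by (simp add: order.strict_trans2)
    next
      case 3 then have "f x < r" using outside maps by (cases "0 \<le> x") auto
      then show ?thesis using 3 outside by simp
    next
      case 4
      show ?thesis
      proof (cases "x = 0")
        case True then show ?thesis using f0 ge[of y] xy by simp
      next
        case False
        then have x0: "0 < x" using 4 by simp
        have sub: "{0..y} \<subseteq> {0..<r}" using 4 by auto
        have "continuous_on {0..y} f" by (rule continuous_on_subset[OF cont sub])
        moreover have "inj_on f {0..y}" by (rule inj_on_subset[OF bij_betw_imp_inj_on[OF inside] sub])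
        ultimately have "f 0 < f x \<and> f x < f y \<or> f y < f x \<and> f x < f 0"
          by (rule continuous_inj_imp_mono[OF x0 xy])
        then show ?thesis using ge[of x] x0 f0 by auto
      qed
    qed
  qed
  then show ?thesis unfolding incr_homeo_def using V_bij[OF fV] by (simp add: strict_monoI)
qed

text \<open>A map commuting with an increasing homeomorphism h is continuous at s as soon as
  it is continuous at h s: conjugation by h transports continuity.\<close>
lemma commuting_isCont_transfer:
  assumes h: "incr_homeo h" and comm: "g \<circ> h = h \<circ> g" and cont: "isCont g (h s)"
  shows "isCont g s"
proof -
  have "g = inv h \<circ> g \<circ> h"
  proof
    fix x
    have "g (h x) = h (g x)" using fun_cong[OF comm, of x] by simp
    then show "g x = (inv h \<circ> g \<circ> h) x" using incr_homeo_apply_inv[OF h] by simp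
  qed
  moreover have "isCont (inv h \<circ> g \<circ> h) s"
    using incr_homeo_isCont[OF h] cont incr_homeo_isCont[OF incr_homeo_inv[OF h]]
    by (intro continuous_intros) auto
  ultimately show ?thesis by simp
qed

lemma supp_commuting_invariant:
  assumes comm: "g \<circ> h = h \<circ> g" and "inj g" and x: "x \<in> supp h"
  shows "g x \<in> supp h"
proof -
  have "h (g x) = g (h x)" using fun_cong[OF comm, of x] by simp
  moreover have "g (h x) \<noteq> g x" using x \<open>inj g\<close> unfolding supp_def by (auto dest: injD)
  ultimately show ?thesis unfolding supp_def by auto
qed

text \<open>If h moves every point upwards (or fixes it), a finite set mapped into itself by h on
  supp h cannot meet supp h: its largest point in supp h would be moved further up.\<close>
lemma finite_invariant_disjoint_supp:
  assumes fin: "finite D" and inv: "\<And>x. x \<in> D \<Longrightarrow> x \<in> supp h \<Longrightarrow> h x \<in> D"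
    and "inj h" and ge: "\<And>x. x \<le> h x"
  shows "D \<inter> supp h = {}"
proof (rule ccontr)
  assume nonempty: "D \<inter> supp h \<noteq> {}"
  define m where "m = Max (D \<inter> supp h)"
  have "m \<in> D \<inter> supp h" using Max_in[OF _ nonempty] fin unfolding m_def by simp
  then have "h m \<in> D \<inter> supp h"
    using inv supp_commuting_invariant[of h h m] \<open>inj h\<close> by simp
  then have "h m \<le> m" using Max_ge[of "D \<inter> supp h"] fin unfolding m_def by simp
  with ge[of m] \<open>m \<in> D \<inter> supp h\<close> show False unfolding supp_def by simp
qed

text \<open>Key step: an element of V commuting with an upward-moving increasing homeomorphism h
  is continuous on supp h, because its finitely many discontinuities are permuted by h.\<close>
lemma commuting_discont_disjoint_supp:
  assumes g: "g \<in> Vgrp r \<Lambda> A" and h: "incr_homeo h" and ge: "\<And>x. x \<le> h x"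
    and supp_h: "supp h \<subseteq> {0<..<r}" and comm: "g \<circ> h = h \<circ> g"
  shows "discont r g \<inter> supp h = {}"
proof (rule finite_invariant_disjoint_supp)
  show "finite (discont r g)"
    using g pw_affine_discont_finite unfolding Vgrp_def by blast
  show "h x \<in> discont r g" if "x \<in> discont r g" "x \<in> supp h" for x
  proof -
    have "h x \<in> supp h" using supp_commuting_invariant[of h h x] that(2) h
      unfolding incr_homeo_def by (simp add: bij_is_inj)
    then show ?thesis using that(1) supp_h commuting_isCont_transfer[OF h comm, of x]
      unfolding discont_def by auto
  qed
qed (use h ge in \<open>auto simp: incr_homeo_def bij_is_inj\<close>)

lemma centralizer_eq_if_continuous:
  assumes G: "is_subgroup_of G (Vgrp r {0<..} UNIV)" and GF: "G \<inter> Fgrp r {0<..} UNIV = Fgrp r \<Lambda> A"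
    and cont: "\<And>g. g \<in> centralizer G X \<Longrightarrow> discont r g = {}"
  shows "centralizer G X = centralizer (Fgrp r \<Lambda> A) X"
proof
  show "centralizer (Fgrp r \<Lambda> A) X \<subseteq> centralizer G X"
    using GF unfolding centralizer_def by auto
  show "centralizer G X \<subseteq> centralizer (Fgrp r \<Lambda> A) X"
  proof
    fix g assume gC: "g \<in> centralizer G X"
    then have "g \<in> G" unfolding centralizer_def by simp
    then have gV: "g \<in> Vgrp r {0<..} UNIV" using G unfolding is_subgroup_of_def by auto
    then have "g \<in> Fgrp r {0<..} UNIV"
      using V_continuous_on[OF gV cont[OF gC]] unfolding Fgrp_def by simp
    then show "g \<in> centralizer (Fgrp r \<Lambda> A) X" using gC GF \<open>g \<in> G\<close> unfolding centralizer_def by auto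
  qed
qed

lemma right_germ_fixed_endpoint:
  fixes g :: "real \<Rightarrow> real"
  assumes germ: "\<alpha> < e" "0 < l" "\<forall>x\<in>{\<alpha>..<e}. g x = l * x + c"
    and "\<alpha> < \<gamma>" and maps: "\<And>x. x \<in> {\<alpha><..<\<gamma>} \<Longrightarrow> g x \<in> {\<alpha><..<\<gamma>}"
    and off: "g \<alpha> \<notin> {\<alpha><..<\<gamma>}"
  shows "g \<alpha> = \<alpha>" and "(g \<longlongrightarrow> \<alpha>) (at_right \<alpha>)"
proof -
  define m where "m = min e \<gamma>"
  have m: "\<alpha> < m" using germ(1) \<open>\<alpha> < \<gamma>\<close> unfolding m_def by simp
  have near: "eventually (\<lambda>x. x \<in> {\<alpha><..<m}) (at_right \<alpha>)" by (rule eventually_at_right_real[OF m])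
  have affine: "eventually (\<lambda>x. g x = l * x + c) (at_right \<alpha>)"
    by (rule eventually_mono[OF near]) (use germ(3) m_def in auto)
  have g\<alpha>: "g \<alpha> = l * \<alpha> + c" using germ by simp
  have lim: "(g \<longlongrightarrow> g \<alpha>) (at_right \<alpha>)"
    unfolding g\<alpha> using tendsto_cong[OF affine] by (auto intro!: tendsto_eq_intros)
  have "\<alpha> \<le> g \<alpha>"
  proof (rule tendsto_lowerbound[OF lim])
    show "eventually (\<lambda>x. \<alpha> \<le> g x) (at_right \<alpha>)"
      by (rule eventually_mono[OF near]) (use maps m_def in fastforce)
  qed simp
  moreover have "g \<alpha> < \<gamma>"
  proof -
    define x where "x = (\<alpha> + m) / 2"
    have x: "x \<in> {\<alpha><..<m}" using m unfolding x_def by auto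
    then have "g x < \<gamma>" using maps m_def by auto
    moreover have "g x = l * x + c" using x germ(3) m_def by auto
    moreover have "l * \<alpha> < l * x" using germ(2) x by simp
    ultimately show ?thesis using g\<alpha> by simp
  qed
  ultimately show fixed: "g \<alpha> = \<alpha>" using off by auto
  show "(g \<longlongrightarrow> \<alpha>) (at_right \<alpha>)" using lim unfolding fixed .
qed

text \<open>Continuity at a common endpoint, from the left: if g is affine with positive slope
  left of alpha, maps (beta,alpha) into itself and commutes with an increasing homeomorphism h
  whose support is (beta,alpha), then the left limit of g at alpha is a fixed point of h in
  (beta,alpha], hence equals alpha.\<close>
lemma left_germ_fixed_endpoint:
  fixes g h :: "real \<Rightarrow> real"
  assumes germ: "s < \<alpha>" "0 < l" "\<forall>x\<in>{s<..<\<alpha>}. g x = l * x + c"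
    and "\<beta> < \<alpha>" and maps: "\<And>x. x \<in> {\<beta><..<\<alpha>} \<Longrightarrow> g x \<in> {\<beta><..<\<alpha>}"
    and h: "incr_homeo h" and supp_h: "supp h = {\<beta><..<\<alpha>}" and comm: "g \<circ> h = h \<circ> g"
  shows "(g \<longlongrightarrow> \<alpha>) (at_left \<alpha>)"
proof -
  define t0 where "t0 = max s \<beta>"
  define L where "L = l * \<alpha> + c"
  have t0: "t0 < \<alpha>" using germ(1) \<open>\<beta> < \<alpha>\<close> unfolding t0_def by simp
  have near: "eventually (\<lambda>x. x \<in> {t0<..<\<alpha>}) (at_left \<alpha>)" by (rule eventually_at_left_real[OF t0])
  have affine: "eventually (\<lambda>x. g x = l * x + c) (at_left \<alpha>)"
    by (rule eventually_mono[OF near]) (use germ(3) t0_def in auto)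
  have lim: "(g \<longlongrightarrow> L) (at_left \<alpha>)"
    unfolding L_def using tendsto_cong[OF affine] by (auto intro!: tendsto_eq_intros)
  have L_le: "L \<le> \<alpha>"
  proof (rule tendsto_upperbound[OF lim])
    show "eventually (\<lambda>x. g x \<le> \<alpha>) (at_left \<alpha>)"
      by (rule eventually_mono[OF near]) (use maps t0_def in fastforce)
  qed simp
  have L_gt: "\<beta> < L"
  proof -
    define x where "x = (t0 + \<alpha>) / 2"
    have x: "x \<in> {t0<..<\<alpha>}" using t0 unfolding x_def by auto
    then have "\<beta> < g x" using maps t0_def by auto
    moreover have "g x = l * x + c" using x germ(3) t0_def by auto
    moreover have "l * x < l * \<alpha>" using germ(2) x by simp
    ultimately show ?thesis unfolding L_def by simp
  qed
  have "h L = L"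
  proof -
    have h_inj: "inj h" using h unfolding incr_homeo_def by (simp add: bij_is_inj)
    have "h \<alpha> = \<alpha>" using supp_h unfolding supp_def by auto
    then have "(h \<longlongrightarrow> \<alpha>) (at_left \<alpha>)"
      using incr_homeo_isCont[OF h, of \<alpha>] unfolding isCont_def by (simp add: filterlim_at_split)
    moreover have "eventually (\<lambda>x. h x \<in> {\<beta><..<\<alpha>}) (at_left \<alpha>)"
      using eventually_at_left_real[OF \<open>\<beta> < \<alpha>\<close>] supp_commuting_invariant[of h h] h_inj supp_h
      by (auto elim!: eventually_mono)
    ultimately have "filterlim h (at_left \<alpha>) (at_left \<alpha>)"
      unfolding filterlim_at by (auto elim!: eventually_mono)
    then have "((\<lambda>x. g (h x)) \<longlongrightarrow> L) (at_left \<alpha>)" by (rule filterlim_compose[OF lim])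
    moreover have "((\<lambda>x. g (h x)) \<longlongrightarrow> h L) (at_left \<alpha>)"
      using isCont_tendsto_compose[OF incr_homeo_isCont[OF h] lim] fun_cong[OF comm] by simp
    ultimately show ?thesis by (intro tendsto_unique[of "at_left \<alpha>", symmetric]) simp_all
  qed
  then have "L \<notin> {\<beta><..<\<alpha>}" using supp_h unfolding supp_def by blast
  then have "L = \<alpha>" using L_le L_gt by auto
  then show ?thesis using lim by simp
qed

lemma isCont_at_common_endpoint:
  assumes g: "g \<in> Vgrp r \<Lambda> A" "\<Lambda> \<subseteq> {0<..}"
    and ends: "0 < \<beta>" "\<beta> < \<alpha>" "\<alpha> < \<gamma>" "\<gamma> \<le> r"
    and h1: "incr_homeo h1" "supp h1 = {\<beta><..<\<alpha>}" "g \<circ> h1 = h1 \<circ> g"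
    and h2: "incr_homeo h2" "supp h2 = {\<alpha><..<\<gamma>}" "g \<circ> h2 = h2 \<circ> g"
  shows "isCont g \<alpha>"
proof -
  have pw: "pw_affine r \<Lambda> A g" using g(1) unfolding Vgrp_def by simp
  have "inj g" using V_bij[OF g(1)] by (rule bij_is_inj)
  then have maps1: "\<And>x. x \<in> {\<beta><..<\<alpha>} \<Longrightarrow> g x \<in> {\<beta><..<\<alpha>}"
    and maps2: "\<And>x. x \<in> {\<alpha><..<\<gamma>} \<Longrightarrow> g x \<in> {\<alpha><..<\<gamma>}"
    using supp_commuting_invariant[OF h1(3)] supp_commuting_invariant[OF h2(3)] h1(2) h2(2) by auto
  have off: "g \<alpha> \<notin> {\<alpha><..<\<gamma>}"
  proof -
    have "h2 \<alpha> = \<alpha>" using h2(2) unfolding supp_def by auto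
    then have "h2 (g \<alpha>) = g \<alpha>" using fun_cong[OF h2(3), of \<alpha>] by simp
    then have "g \<alpha> \<notin> supp h2" unfolding supp_def by simp
    then show ?thesis using h2(2) by simp
  qed
  obtain e l c where r_germ: "\<alpha> < e" "e \<le> r" "l \<in> \<Lambda>" "\<forall>x\<in>{\<alpha>..<e}. g x = l * x + c"
    by (rule pw_affine_right_germ[OF pw, of \<alpha>]) (use ends in simp_all)
  have "0 < l" using r_germ(3) g(2) by auto
  note right_end = right_germ_fixed_endpoint[OF r_germ(1) this r_germ(4) ends(3) maps2 off]
  obtain s l' c' where l_germ: "s < \<alpha>" "l' \<in> \<Lambda>" "\<forall>x\<in>{s<..<\<alpha>}. g x = l' * x + c'"
    by (rule pw_affine_left_germ[OF pw, of \<alpha>]) (use ends in simp_all)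
  have "0 < l'" using l_germ(2) g(2) by auto
  note left = left_germ_fixed_endpoint[OF l_germ(1) this l_germ(3) ends(2) maps1 h1]
  show ?thesis using filterlim_split_at[OF left right_end(2)] right_end(1) unfolding isCont_def by simp
qed

lemma orbit_limit_fixed:
  fixes f :: "real \<Rightarrow> real"
  assumes "isCont f L" "X \<longlonglongrightarrow> L" "\<And>n. X (Suc n) = f (X n)"
  shows "f L = L"
proof -
  have "(\<lambda>n. f (X n)) \<longlonglongrightarrow> f L" by (rule isCont_tendsto_compose[OF assms(1,2)])
  moreover have "(\<lambda>n. f (X n)) \<longlonglongrightarrow> L" using LIMSEQ_Suc[OF assms(2)] assms(3) by simp
  ultimately show ?thesis by (rule LIMSEQ_unique)
qed

lemma orbit_escapes_above:
  assumes a: "incr_homeo a" and ge: "\<And>x. x \<le> a x"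
    and no_fix: "\<And>y. x0 \<le> y \<Longrightarrow> y \<le> t \<Longrightarrow> a y \<noteq> y"
  shows "\<exists>n. t < (a ^^ n) x0"
proof (rule ccontr)
  assume "\<not> ?thesis"
  then have bound: "\<And>n. (a ^^ n) x0 \<le> t" by (simp add: not_less)
  define X where "X n = (a ^^ n) x0" for n
  have step: "X (Suc n) = a (X n)" for n unfolding X_def by simp
  have "incseq X" by (rule incseq_SucI) (simp add: step ge)
  moreover have "bdd_above (range X)" using bound unfolding X_def by (auto intro!: bdd_aboveI[where M = t])
  ultimately have lim: "X \<longlonglongrightarrow> (SUP n. X n)" by (intro LIMSEQ_incseq_SUP)
  have "(SUP n. X n) \<le> t" using LIMSEQ_le_const2[OF lim] bound unfolding X_def by auto
  moreover have "x0 \<le> (SUP n. X n)" using LIMSEQ_le_const[OF lim] \<open>incseq X\<close> X_def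
    by (metis funpow_0 incseq_def zero_le)
  moreover have "a (SUP n. X n) = (SUP n. X n)"
    by (rule orbit_limit_fixed[OF incr_homeo_isCont[OF a] lim step])
  ultimately show False using no_fix by blast
qed

lemma orbit_escapes_below:
  assumes a: "incr_homeo a" and ge: "\<And>x. x \<le> a x"
    and no_fix: "\<And>y. t \<le> y \<Longrightarrow> y \<le> x0 \<Longrightarrow> a y \<noteq> y"
  shows "\<exists>n. (inv a ^^ n) x0 < t"
proof (rule ccontr)
  assume "\<not> ?thesis"
  then have bound: "\<And>n. t \<le> (inv a ^^ n) x0" by (simp add: not_less)
  define Y where "Y n = (inv a ^^ n) x0" for n
  have step: "Y (Suc n) = inv a (Y n)" for n unfolding Y_def by simp
  have "inv a y \<le> y" for y using ge[of "inv a y"] incr_homeo_inv_apply[OF a] by simp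
  then have "decseq Y" by (intro decseq_SucI) (simp add: step)
  moreover have "bdd_below (range Y)" using bound unfolding Y_def by (auto intro!: bdd_belowI[where m = t])
  ultimately have lim: "Y \<longlonglongrightarrow> (INF n. Y n)" by (intro LIMSEQ_decseq_INF)
  have "t \<le> (INF n. Y n)" using LIMSEQ_le_const[OF lim] bound unfolding Y_def by auto
  moreover have "(INF n. Y n) \<le> x0" using LIMSEQ_le_const2[OF lim] \<open>decseq Y\<close> Y_def
    by (metis funpow_0 decseq_def zero_le)
  moreover have "inv a (INF n. Y n) = (INF n. Y n)"
    by (rule orbit_limit_fixed[OF incr_homeo_isCont[OF incr_homeo_inv[OF a]] lim step])
  then have "a (INF n. Y n) = (INF n. Y n)" by (metis incr_homeo_inv_apply[OF a])
  ultimately show False using no_fix by blast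
qed

lemma orbit_tiling:
  assumes a: "incr_homeo a" "\<And>x. x \<le> a x" and no_fix: "\<And>y. 0 < y \<Longrightarrow> y < r \<Longrightarrow> a y \<noteq> y"
    and x0: "0 < x0" "x0 < r" and t: "0 < t" "t < r"
  shows "\<exists>k. zpow a k x0 \<le> t \<and> t < zpow a (k + 1) x0"
proof -
  have "\<exists>n. t < (a ^^ n) x0" by (rule orbit_escapes_above[OF a]) (use no_fix x0 t in force)
  then obtain n where n: "t < zpow a (int n) x0" by (auto simp: zpow_of_nat)
  have "\<exists>m. (inv a ^^ m) x0 < t" by (rule orbit_escapes_below[OF a]) (use no_fix x0 t in force)
  then obtain m where "(inv a ^^ m) x0 < t" by blast
  then have m: "zpow a (- int m) x0 \<le> t" by (simp add: zpow_neg_of_nat)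
  define K where "K = {j \<in> {- int m..int n}. zpow a j x0 \<le> t}"
  have fin: "finite K" unfolding K_def by (rule finite_subset[of _ "{- int m..int n}"]) auto
  have "- int m \<in> K" unfolding K_def using m by simp
  then have k: "Max K \<in> K" using Max_in[OF fin] by blast
  have k_max: "\<And>j. j \<in> K \<Longrightarrow> j \<le> Max K" using Max_ge[OF fin] .
  have "t < zpow a (Max K + 1) x0"
  proof (cases "Max K + 1 \<le> int n")
    case True
    then have "Max K + 1 \<in> {- int m..int n}" using k unfolding K_def by auto
    then show ?thesis using k_max[of "Max K + 1"] unfolding K_def by force
  next
    case False
    then have "Max K = int n" using k unfolding K_def by auto
    then show ?thesis using k n unfolding K_def by auto
  qed
  then show ?thesis using k unfolding K_def by blast
qed

lemma supp_conjugate: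
  assumes "\<And>x. p (q x) = x" "\<And>x. q (p x) = x"
  shows "supp (p \<circ> b \<circ> q) = p ` supp b"
proof (rule set_eqI)
  fix x
  have "inj p" using assms(2) by (metis injI)
  have "x \<in> supp (p \<circ> b \<circ> q) \<longleftrightarrow> p (b (q x)) \<noteq> p (q x)" unfolding supp_def using assms by simp
  also have "\<dots> \<longleftrightarrow> q x \<in> supp b" unfolding supp_def by (simp add: inj_eq[OF \<open>inj p\<close>])
  also have "\<dots> \<longleftrightarrow> x \<in> p ` supp b"
  proof
    assume "q x \<in> supp b"
    then have "p (q x) \<in> p ` supp b" by (rule imageI)
    then show "x \<in> p ` supp b" using assms(1) by simp
  next
    show "x \<in> p ` supp b \<Longrightarrow> q x \<in> supp b" using assms(2) by auto
  qed
  finally show "x \<in> supp (p \<circ> b \<circ> q) \<longleftrightarrow> x \<in> p ` supp b" .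
qed

lemma shifted_conjugate:
  assumes a: "incr_homeo a" and b: "incr_homeo b" "\<And>x. x \<le> b x" "supp b = {x0<..<a x0}"
  shows "incr_homeo (zpow a k \<circ> b \<circ> zpow a (- k))"
    and "x \<le> (zpow a k \<circ> b \<circ> zpow a (- k)) x"
    and "supp (zpow a k \<circ> b \<circ> zpow a (- k)) = {zpow a k x0<..<zpow a (k + 1) x0}"
proof -
  have p: "incr_homeo (zpow a k)" "incr_homeo (zpow a (- k))" using incr_homeo_zpow[OF a] by auto
  have inverse: "zpow a k (zpow a (- k) y) = y" "zpow a (- k) (zpow a k y) = y" for y
    using zpow_cancel[OF incr_homeo_bij[OF a], of k] zpow_cancel[OF incr_homeo_bij[OF a], of "- k"] by simp_all
  show "incr_homeo (zpow a k \<circ> b \<circ> zpow a (- k))" using p b(1) by (intro incr_homeo_comp)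
  show "x \<le> (zpow a k \<circ> b \<circ> zpow a (- k)) x"
    using incr_homeo_le_iff[OF p(1)] b(2) inverse(1)[of x] by (metis comp_apply)
  have "supp (zpow a k \<circ> b \<circ> zpow a (- k)) = zpow a k ` {x0<..<a x0}"
    using supp_conjugate[OF inverse] b(3) by simp
  also have "\<dots> = {zpow a k x0<..<zpow a (k + 1) x0}"
    using incr_homeo_image_interval[OF p(1)] zpow_succ[OF incr_homeo_bij[OF a]] by simp
  finally show "supp (zpow a k \<circ> b \<circ> zpow a (- k)) = {zpow a k x0<..<zpow a (k + 1) x0}" .
qed

lemma shifted_conjugates_centralizer_continuous:
  assumes a: "incr_homeo a" "\<And>x. x \<le> a x" "supp a = {0<..<r}"
    and b: "incr_homeo b" "\<And>x. x \<le> b x" "supp b = {x0<..<a x0}" and x0: "0 < x0" "x0 < r"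
    and g: "g \<in> Vgrp r {0<..} UNIV"
    and comm: "\<And>k. g \<circ> (zpow a k \<circ> b \<circ> zpow a (- k)) = (zpow a k \<circ> b \<circ> zpow a (- k)) \<circ> g"
  shows "discont r g = {}"
proof -
  define c where "c k = zpow a k \<circ> b \<circ> zpow a (- k)" for k
  define p where "p k = zpow a k x0" for k
  have c_homeo: "incr_homeo (c k)" for k unfolding c_def by (rule shifted_conjugate(1)[OF a(1) b])
  have c_ge: "x \<le> c k x" for k x unfolding c_def by (rule shifted_conjugate(2)[OF a(1) b])
  have c_supp: "supp (c k) = {p k<..<p (k + 1)}" for k
    unfolding c_def p_def by (rule shifted_conjugate(3)[OF a(1) b])
  have c_comm: "g \<circ> c k = c k \<circ> g" for k unfolding c_def by (rule comm)
  have no_fix: "a y \<noteq> y" if "0 < y" "y < r" for y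
  proof -
    have "y \<in> supp a" using a(3) that by simp
    then show ?thesis unfolding supp_def by simp
  qed
  have p_bounds: "0 < p k" "p k < r" for k
  proof -
    have "0 \<notin> supp a" "r \<notin> supp a" using a(3) by auto
    then have "a 0 = 0" "a r = r" unfolding supp_def by auto
    then have "zpow a k 0 = 0" "zpow a k r = r" using zpow_fixed[OF incr_homeo_bij[OF a(1)]] by auto
    then show "0 < p k" "p k < r"
      using incr_homeo_less_iff[OF incr_homeo_zpow[OF a(1)]] x0 unfolding p_def by metis+
  qed
  have p_less: "p k < p (k + 1)" for k
  proof -
    have "x0 < a x0" using a(2)[of x0] no_fix[OF x0] by (simp add: le_less)
    then show ?thesis unfolding p_def zpow_succ[OF incr_homeo_bij[OF a(1)]]
      using incr_homeo_less_iff[OF incr_homeo_zpow[OF a(1)]] by blast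
  qed
  have "isCont g t" if t: "0 < t" "t < r" for t
  proof -
    obtain k where k: "p k \<le> t" "t < p (k + 1)"
      using orbit_tiling[OF a(1,2) no_fix x0 t] unfolding p_def by blast
    show ?thesis
    proof (cases "t = p k")
      case True
      have "p (k - 1) < p k" "supp (c (k - 1)) = {p (k - 1)<..<p k}"
        using p_less[of "k - 1"] c_supp[of "k - 1"] by simp_all
      then show ?thesis unfolding True
        using isCont_at_common_endpoint[OF g _ p_bounds(1) _ p_less less_imp_le[OF p_bounds(2)]
            c_homeo _ c_comm c_homeo c_supp c_comm] by simp
    next
      case False
      then have "t \<in> supp (c k)" using k c_supp by simp
      moreover have "supp (c k) \<subseteq> {0<..<r}" using c_supp[of k] p_bounds(1)[of k] p_bounds(2)[of "k + 1"] by auto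
      ultimately show ?thesis
        using commuting_discont_disjoint_supp[OF g c_homeo c_ge _ c_comm] t unfolding discont_def by blast
    qed
  qed
  then show ?thesis unfolding discont_def by auto
qed

theorem lemma4p7:
  fixes r :: real and \<Lambda> A :: "real set" and G :: "(real \<Rightarrow> real) set"
    and a b :: "real \<Rightarrow> real" and \<alpha>0 :: real
  assumes adm: "admissible r \<Lambda> A"
    and G: "is_subgroup_of G (Vgrp r {0<..} UNIV)"
    and GF: "G \<inter> Fgrp r {0<..} UNIV = Fgrp r \<Lambda> A"
    and a: "a \<in> Fup r \<Lambda> A" and supp_a: "supp a = {0<..<r}"
    and \<alpha>0: "\<alpha>0 \<in> {0<..<r} \<inter> A"
    and b: "b \<in> Fup r \<Lambda> A" and supp_b: "supp b = {\<alpha>0<..<a \<alpha>0}"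
  shows "centralizer G {a} = centralizer (Fgrp r \<Lambda> A) {a}
    \<and> centralizer G {zpow a k \<circ> b \<circ> zpow a (- k) | k. True}
        = centralizer (Fgrp r \<Lambda> A) {zpow a k \<circ> b \<circ> zpow a (- k) | k. True}"
proof
  have a_ge: "\<And>x. x \<le> a x" and b_ge: "\<And>x. x \<le> b x" using a b unfolding Fup_def by auto
  have "0 \<notin> supp a" "0 \<notin> supp b" using supp_a supp_b \<alpha>0 by auto
  then have "a 0 = 0" "b 0 = 0" unfolding supp_def by auto
  then have Ha: "incr_homeo a" and Hb: "incr_homeo b"
    using F_incr_homeo a b a_ge b_ge unfolding Fup_def by auto
  have GV: "g \<in> Vgrp r {0<..} UNIV" if "g \<in> G" for g
    using G that unfolding is_subgroup_of_def by auto
  show "centralizer G {a} = centralizer (Fgrp r \<Lambda> A) {a}"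
  proof (rule centralizer_eq_if_continuous[OF G GF])
    fix g assume "g \<in> centralizer G {a}"
    then have "discont r g \<inter> supp a = {}"
      using commuting_discont_disjoint_supp[OF GV Ha a_ge] supp_a unfolding centralizer_def by auto
    then show "discont r g = {}" using supp_a unfolding discont_def by auto
  qed
  show "centralizer G {zpow a k \<circ> b \<circ> zpow a (- k) | k. True}
      = centralizer (Fgrp r \<Lambda> A) {zpow a k \<circ> b \<circ> zpow a (- k) | k. True}"
  proof (rule centralizer_eq_if_continuous[OF G GF])
    fix g assume "g \<in> centralizer G {zpow a k \<circ> b \<circ> zpow a (- k) | k. True}"
    then show "discont r g = {}"
      using shifted_conjugates_centralizer_continuous[OF Ha a_ge supp_a Hb b_ge supp_b] \<alpha>0 GV
      unfolding centralizer_def by auto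
  qed
qed

end
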